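(* Let $(X,\|\cdot,\cdot\|)$ be a $2$-normed space, $E\subseteq X$, and $f:E\to X$. If $f$ is statistically sequentially continuous on $E$, then $f$ is sequentially continuous on $E$.
   Context: A $2$-normed space is a real linear space $X$ with $\dim X>1$ together with a function $\|\cdot,\cdot\|:X^2\to\mathbb{R}$ such that for all $x,y,z\in X$, $\alpha\in\mathbb{R}$: (1) $\|x,y\|=0$ iff $x,y$ are linearly dependent; (2) $\|x,y\|=\|y,x\|$; (3) $\|\alpha x,y\|=|\alpha|\|x,y\|$; (4) $\|x,y+z\|\le\|x,y\|+\|x,z\|$. A sequence $(x_n)$ in $X$ converges to $x\in X$ if $\lim_{n\to\infty}\|x_n-x,z\|=0$ for every $z\in X$. For $M\subseteq\mathbb{N}$, its asymptotic density is $\delta(M)=\lim_{n\to\infty}\frac1n|\{k\le n:k\in M\}|$ when the limit exists. A sequence $(x_k)$ in $X$ statistically converges to $L\in X$ if for every $\epsilon>0$ and every $z\in X$, $\lim_{n\to\infty}\frac1n|\{k\le n:\|x_k-L,z\|\ge\epsilon\}|=0$. A function $f:E\to X$ is sequentially continuous on $E$ if for every $x_0\in E$ and every sequence $(x_n)$ in $E$ converging to $x_0$, $(f(x_n))$ converges to $f(x_0)$. It is statistically sequentially continuous on $E$ if for every $x_0\in E$ and every sequence $(x_n)$ in $E$ statistically converging to $x_0$, $(f(x_n))$ statistically converges to $f(x_0)$. *)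

theory Defs
  imports Complex_Main
begin

definition lin_dep2 :: "'a::real_vector \<Rightarrow> 'a \<Rightarrow> bool" where
  "lin_dep2 x y \<longleftrightarrow> (\<exists>a b::real. (a \<noteq> 0 \<or> b \<noteq> 0) \<and> a *\<^sub>R x + b *\<^sub>R y = 0)"

definition two_normed :: "('a::real_vector \<Rightarrow> 'a \<Rightarrow> real) \<Rightarrow> bool" where
  "two_normed N \<longleftrightarrow>
     (\<exists>x y::'a. \<not> lin_dep2 x y) \<and>
     (\<forall>x y. N x y = 0 \<longleftrightarrow> lin_dep2 x y) \<and>
     (\<forall>x y. N x y = N y x) \<and>
     (\<forall>x y (\<alpha>::real). N (\<alpha> *\<^sub>R x) y = \<bar>\<alpha>\<bar> * N x y) \<and>
     (\<forall>x y z. N x (y + z) \<le> N x y + N x z)"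

definition two_conv :: "('a::real_vector \<Rightarrow> 'a \<Rightarrow> real) \<Rightarrow> (nat \<Rightarrow> 'a) \<Rightarrow> 'a \<Rightarrow> bool" where
  "two_conv N xs x \<longleftrightarrow> (\<forall>z. (\<lambda>n. N (xs n - x) z) \<longlonglongrightarrow> 0)"

definition two_stat_conv :: "('a::real_vector \<Rightarrow> 'a \<Rightarrow> real) \<Rightarrow> (nat \<Rightarrow> 'a) \<Rightarrow> 'a \<Rightarrow> bool" where
  "two_stat_conv N xs L \<longleftrightarrow>
     (\<forall>\<epsilon>>0. \<forall>z. (\<lambda>n. real (card {k. 1 \<le> k \<and> k \<le> n \<and> N (xs k - L) z \<ge> \<epsilon>}) / real n) \<longlonglongrightarrow> 0)"

definition seq_continuous_on2 :: "('a::real_vector \<Rightarrow> 'a \<Rightarrow> real) \<Rightarrow> 'a set \<Rightarrow> ('a \<Rightarrow> 'a) \<Rightarrow> bool" where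
  "seq_continuous_on2 N E f \<longleftrightarrow>
     (\<forall>x0\<in>E. \<forall>xs. (\<forall>n. xs n \<in> E) \<longrightarrow> two_conv N xs x0 \<longrightarrow> two_conv N (f \<circ> xs) (f x0))"

definition stat_seq_continuous_on2 :: "('a::real_vector \<Rightarrow> 'a \<Rightarrow> real) \<Rightarrow> 'a set \<Rightarrow> ('a \<Rightarrow> 'a) \<Rightarrow> bool" where
  "stat_seq_continuous_on2 N E f \<longleftrightarrow>
     (\<forall>x0\<in>E. \<forall>xs. (\<forall>n. xs n \<in> E) \<longrightarrow> two_stat_conv N xs x0 \<longrightarrow> two_stat_conv N (f \<circ> xs) (f x0))"

end

theory Submission
  imports Defs "HOL-Library.Infinite_Set"
begin

text \<open>Ordinary convergence implies statistical convergence. If f(x_n) failed to converge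
  to f(x_0), some subsequence of x_n would have all its images at 2-norm distance at least
  \<epsilon> from f(x_0) against some fixed z. That subsequence still converges to x_0, hence
  converges statistically, but its image is bounded away from f(x_0) at every index and so
  cannot converge statistically.\<close>

lemma two_normed_nonneg:
  assumes "two_normed N"
  shows "N x y \<ge> 0"
proof -
  from assms have sym: "\<And>x y. N x y = N y x"
    and hom: "\<And>x y a. N (a *\<^sub>R x) y = \<bar>a\<bar> * N x y"
    and tri: "\<And>x y z. N x (y + z) \<le> N x y + N x z"
    unfolding two_normed_def by blast+
  have zero: "N x 0 = 0" using sym[of x 0] hom[of 0 0 x] by simp
  have minus: "N x (-y) = N x y" using sym[of x "-y"] sym[of x y] hom[of "-1" y x] by simp
  have "N x (y + (-y)) \<le> N x y + N x (-y)" by (rule tri)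
  then show ?thesis using zero minus by simp
qed

lemma two_conv_subseq:
  assumes "two_conv N xs x" and "strict_mono r"
  shows "two_conv N (xs \<circ> r) x"
  using assms LIMSEQ_subseq_LIMSEQ unfolding two_conv_def by (fastforce simp: comp_def)

lemma two_conv_imp_two_stat_conv:
  assumes "two_conv N xs x"
  shows "two_stat_conv N xs x"
  unfolding two_stat_conv_def
proof (intro allI impI)
  fix \<epsilon> :: real and z
  assume "\<epsilon> > 0"
  let ?bad = "\<lambda>n. {k. 1 \<le> k \<and> k \<le> n \<and> N (xs k - x) z \<ge> \<epsilon>}"
  have "(\<lambda>n. N (xs n - x) z) \<longlonglongrightarrow> 0" using assms unfolding two_conv_def by blast
  then obtain M where M: "\<And>n. n \<ge> M \<Longrightarrow> \<bar>N (xs n - x) z\<bar> < \<epsilon>"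
    using \<open>\<epsilon> > 0\<close> unfolding LIMSEQ_iff by auto
  have "?bad n \<subseteq> {..<M}" for n
  proof
    fix k
    assume "k \<in> ?bad n"
    then have "\<not> \<bar>N (xs k - x) z\<bar> < \<epsilon>" by auto
    then show "k \<in> {..<M}" using M[of k] by (cases "M \<le> k") auto
  qed
  then have card_bad: "card (?bad n) \<le> M" for n
    using card_mono[of "{..<M}"] by fastforce
  show "(\<lambda>n. real (card (?bad n)) / real n) \<longlonglongrightarrow> 0"
  proof (rule real_tendsto_sandwich[where f = "\<lambda>n. 0" and h = "\<lambda>n. real M / real n"])
    show "\<forall>\<^sub>F n in sequentially. real (card (?bad n)) / real n \<le> real M / real n"
      using card_bad by (intro always_eventually allI divide_right_mono) auto
  qed (auto intro: lim_const_over_n)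
qed

lemma not_two_stat_conv_if_bounded_away:
  assumes "\<epsilon> > 0" and "\<And>k. N (ys k - L) z \<ge> \<epsilon>"
  shows "\<not> two_stat_conv N ys L"
proof
  assume "two_stat_conv N ys L"
  then have to_zero: "(\<lambda>n. real (card {k. 1 \<le> k \<and> k \<le> n \<and> N (ys k - L) z \<ge> \<epsilon>}) / real n)
      \<longlonglongrightarrow> 0"
    using assms(1) unfolding two_stat_conv_def by blast
  have "{k. 1 \<le> k \<and> k \<le> n \<and> N (ys k - L) z \<ge> \<epsilon>} = {1..n}" for n
    using assms(2) by auto
  then have "\<forall>\<^sub>F n in sequentially.
      real (card {k. 1 \<le> k \<and> k \<le> n \<and> N (ys k - L) z \<ge> \<epsilon>}) / real n = 1"
    unfolding eventually_sequentially by (intro exI[of _ 1]) auto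
  then have "(\<lambda>n. real (card {k. 1 \<le> k \<and> k \<le> n \<and> N (ys k - L) z \<ge> \<epsilon>}) / real n)
      \<longlonglongrightarrow> 1"
    by (rule tendsto_eventually)
  with to_zero show False using LIMSEQ_unique by fastforce
qed

lemma not_LIMSEQ_zero_imp_subseq_bounded_away:
  fixes u :: "nat \<Rightarrow> 'a::real_normed_vector"
  assumes "\<not> u \<longlonglongrightarrow> 0"
  obtains \<epsilon> and r :: "nat \<Rightarrow> nat" where "\<epsilon> > 0" "strict_mono r" "\<And>n. norm (u (r n)) \<ge> \<epsilon>"
proof -
  from assms obtain \<epsilon> where "\<epsilon> > 0" and "\<forall>M. \<exists>n\<ge>M. \<not> norm (u n - 0) < \<epsilon>"
    unfolding LIMSEQ_iff by blast
  then have inf: "infinite {n. norm (u n) \<ge> \<epsilon>}"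
    unfolding infinite_nat_iff_unbounded_le by (auto simp: not_less)
  from infinite_enumerate[OF inf] obtain r :: "nat \<Rightarrow> nat"
    where "strict_mono r" "\<And>n. norm (u (r n)) \<ge> \<epsilon>"
    by auto
  then show thesis by (rule that[OF \<open>\<epsilon> > 0\<close>])
qed

theorem theorem3p1:
  fixes N :: "'a::real_vector \<Rightarrow> 'a \<Rightarrow> real" and E :: "'a set" and f :: "'a \<Rightarrow> 'a"
  assumes "two_normed N"
    and "stat_seq_continuous_on2 N E f"
  shows "seq_continuous_on2 N E f"
  unfolding seq_continuous_on2_def
proof (intro ballI allI impI)
  fix x0 xs
  assume "x0 \<in> E" and xs_in_E: "\<forall>n. xs n \<in> E" and "two_conv N xs x0"
  show "two_conv N (f \<circ> xs) (f x0)"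
    unfolding two_conv_def
  proof (rule allI, rule ccontr)
    fix z
    assume "\<not> (\<lambda>n. N ((f \<circ> xs) n - f x0) z) \<longlonglongrightarrow> 0"
    then obtain \<epsilon> and r :: "nat \<Rightarrow> nat" where "\<epsilon> > 0" "strict_mono r"
      and "\<And>n. norm (N ((f \<circ> xs) (r n) - f x0) z) \<ge> \<epsilon>"
      by (elim not_LIMSEQ_zero_imp_subseq_bounded_away) blast
    then have away: "\<And>n. N ((f \<circ> xs) (r n) - f x0) z \<ge> \<epsilon>"
      using two_normed_nonneg[OF assms(1)] by simp
    have "two_stat_conv N (xs \<circ> r) x0"
      using \<open>two_conv N xs x0\<close> \<open>strict_mono r\<close>
      by (intro two_conv_imp_two_stat_conv two_conv_subseq)
    then have "two_stat_conv N (f \<circ> (xs \<circ> r)) (f x0)"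
      using assms(2) \<open>x0 \<in> E\<close> xs_in_E unfolding stat_seq_continuous_on2_def by auto
    moreover have "\<And>k. N ((f \<circ> (xs \<circ> r)) k - f x0) z \<ge> \<epsilon>"
      using away by simp
    ultimately show False
      using not_two_stat_conv_if_bounded_away \<open>\<epsilon> > 0\<close> by blast
  qed
qed

end
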